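(* Let $D\subseteq\mathbb C^{n-1}\times\mathbb R$ be a domain and $u:D\times(0,+\infty)\to\mathbb R$, $u=u(x,y',t)$, continuous. Then the function $v(z,t)=y_n-u(x,y',t)$ is a weak solution of $v_t=\mathcal H(v)$ in $(D\times i\mathbb R)\times(0,+\infty)$ if and only if $u$ is a weak solution of $u_t=\mathcal H_0(u)$ in $D\times(0,+\infty)$.
   Context: Coordinates $z_\alpha=x_\alpha+iy_\alpha$ on $\mathbb C^n$, $n\ge2$; $x=(x_1,\dots,x_n)$, $y'=(y_1,\dots,y_{n-1})$, and $\mathbb C^{n-1}\times\mathbb R$ has coordinates $(x,y')$, so $D\times i\mathbb R=\{z:(x,y')\in D\}$. For $v(z,t)$ write $v_\alpha=\partial v/\partial z_\alpha$, $v_{\bar\beta}=\partial v/\partial\bar z_\beta$, $v_{\alpha\bar\beta}=\partial^2v/\partial z_\alpha\partial\bar z_\beta$, $|\partial v|^2=\sum_\alpha|v_\alpha|^2$, and for $C^2$ $v$ with $\partial v\ne0$, $\mathcal H(v)=\sum_{\alpha,\beta}(\delta_{\alpha\beta}-|\partial v|^{-2}v_\alpha v_{\bar\beta})v_{\alpha\bar\beta}$. Weak (viscosity) solutions of $v_t=\mathcal H(v)$: continuous $v$ such that for every $\phi$ smooth near $(z^0,t^0)$ with $v-\phi$ having a local max (resp. min) at $(z^0,t^0)$, $\phi_t\le\mathcal H(\phi)$ (resp. $\ge$) there if $\partial\phi\ne0$, and $\phi_t\le$ (resp. $\ge$) $\sum_{\alpha,\beta}(\delta_{\alpha\beta}-\eta_\alpha\bar\eta_\beta)\phi_{\alpha\bar\beta}$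 for some $|\eta|\le1$ if $\partial\phi=0$. For a $C^2$ function $w=w(x,y')$ (independent of $y_n$) define $\mathcal H_0(w)(x,y')=\mathcal H(w-y_n)$; this is well defined since $\partial(w-y_n)/\partial z_n=\tfrac12(w_{x_n}+i)\neq0$, and it is a degenerate elliptic quasilinear second-order operator in $(x,y')$ (the Levi operator for graphs $y_n=w$). A continuous $u(x,y',t)$ is a weak solution of $u_t=\mathcal H_0(u)$ if for every smooth $\phi(x,y',t)$ such that $u-\phi$ has a local maximum (resp. minimum) at a point, $\phi_t\le\mathcal H_0(\phi)$ (resp. $\phi_t\ge\mathcal H_0(\phi)$) at that point. *)

theory Defs
  imports "HOL-Analysis.Analysis"
begin

fun Ck_on :: "nat \<Rightarrow> 'a::real_normed_vector set \<Rightarrow> ('a \<Rightarrow> real) \<Rightarrow> bool" where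
  "Ck_on 0 S f = continuous_on S f"
| "Ck_on (Suc k) S f =
     ((\<forall>x\<in>S. f differentiable (at x)) \<and>
      (\<forall>v. Ck_on k S (\<lambda>x. frechet_derivative f (at x) v)))"

definition smooth_on :: "'a::real_normed_vector set \<Rightarrow> ('a \<Rightarrow> real) \<Rightarrow> bool" where
  "smooth_on S f \<longleftrightarrow> (\<forall>k. Ck_on k S f)"

definition dirD :: "('a::real_normed_vector \<Rightarrow> real) \<Rightarrow> 'a \<Rightarrow> 'a \<Rightarrow> real" where
  "dirD f p v = frechet_derivative f (at p) v"

definition dirD2 :: "('a::real_normed_vector \<Rightarrow> real) \<Rightarrow> 'a \<Rightarrow> 'a \<Rightarrow> 'a \<Rightarrow> real" where
  "dirD2 f p v w = frechet_derivative (\<lambda>q. frechet_derivative f (at q) v) (at p) w"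

definition ex :: "'i::finite \<Rightarrow> (complex^'i) \<times> real" where
  "ex a = (axis a 1, 0)"

definition ey :: "'i::finite \<Rightarrow> (complex^'i) \<times> real" where
  "ey a = (axis a \<i>, 0)"

definition et :: "(complex^'i::finite) \<times> real" where
  "et = (0, 1)"

definition dt :: "((complex^'i::finite) \<times> real \<Rightarrow> real) \<Rightarrow> (complex^'i) \<times> real \<Rightarrow> real" where
  "dt f p = dirD f p et"

definition dz :: "((complex^'i::finite) \<times> real \<Rightarrow> real) \<Rightarrow> (complex^'i) \<times> real \<Rightarrow> 'i \<Rightarrow> complex" where
  "dz f p a = (complex_of_real (dirD f p (ex a)) - \<i> * complex_of_real (dirD f p (ey a))) / 2"

definition dzb :: "((complex^'i::finite) \<times> real \<Rightarrow> real) \<Rightarrow> (complex^'i) \<times> real \<Rightarrow> 'i \<Rightarrow> complex" where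
  "dzb f p a = (complex_of_real (dirD f p (ex a)) + \<i> * complex_of_real (dirD f p (ey a))) / 2"

text \<open>mixed derivative d^2 f / (dz_a d conj(z_b)) = (1/4)(d_{x_a} - i d_{y_a})(d_{x_b} + i d_{y_b}) f\<close>
definition dzdzb :: "((complex^'i::finite) \<times> real \<Rightarrow> real) \<Rightarrow> (complex^'i) \<times> real \<Rightarrow> 'i \<Rightarrow> 'i \<Rightarrow> complex" where
  "dzdzb f p a b =
     (complex_of_real (dirD2 f p (ex b) (ex a))
      + \<i> * complex_of_real (dirD2 f p (ey b) (ex a))
      - \<i> * complex_of_real (dirD2 f p (ex b) (ey a))
      + complex_of_real (dirD2 f p (ey b) (ey a))) / 4"

definition gradsq :: "((complex^'i::finite) \<times> real \<Rightarrow> real) \<Rightarrow> (complex^'i) \<times> real \<Rightarrow> real" where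
  "gradsq f p = (\<Sum>a\<in>UNIV. (cmod (dz f p a))^2)"

text \<open>Levi operator H(f) (real-valued; the real part is taken, the sum is real anyway)\<close>
definition levi :: "((complex^'i::finite) \<times> real \<Rightarrow> real) \<Rightarrow> (complex^'i) \<times> real \<Rightarrow> real" where
  "levi f p = Re (\<Sum>a\<in>UNIV. \<Sum>b\<in>UNIV.
      ((if a = b then 1 else 0) - dz f p a * dzb f p b / complex_of_real (gradsq f p)) * dzdzb f p a b)"

text \<open>degenerate operator with parameter eta, used where del f = 0\<close>
definition levi_deg :: "((complex^'i::finite) \<times> real \<Rightarrow> real) \<Rightarrow> (complex^'i) \<times> real \<Rightarrow> complex^'i \<Rightarrow> real" where
  "levi_deg f p \<eta> = Re (\<Sum>a\<in>UNIV. \<Sum>b\<in>UNIV.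
      ((if a = b then 1 else 0) - (\<eta> $ a) * cnj (\<eta> $ b)) * dzdzb f p a b)"

definition loc_max :: "'a::metric_space set \<Rightarrow> ('a \<Rightarrow> real) \<Rightarrow> 'a \<Rightarrow> bool" where
  "loc_max S g p \<longleftrightarrow> (\<exists>e>0. \<forall>q\<in>S. dist q p < e \<longrightarrow> g q \<le> g p)"

definition loc_min :: "'a::metric_space set \<Rightarrow> ('a \<Rightarrow> real) \<Rightarrow> 'a \<Rightarrow> bool" where
  "loc_min S g p \<longleftrightarrow> (\<exists>e>0. \<forall>q\<in>S. dist q p < e \<longrightarrow> g p \<le> g q)"

definition weak_sol_H :: "((complex^'i::finite) \<times> real) set \<Rightarrow> ((complex^'i) \<times> real \<Rightarrow> real) \<Rightarrow> bool" where
  "weak_sol_H \<Omega> v \<longleftrightarrow> continuous_on \<Omega> v \<and>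
     (\<forall>p\<in>\<Omega>. \<forall>\<phi> U. open U \<and> p \<in> U \<and> smooth_on U \<phi> \<longrightarrow>
        (loc_max \<Omega> (\<lambda>q. v q - \<phi> q) p \<longrightarrow>
           (if (\<forall>a. dz \<phi> p a = 0)
            then (\<exists>\<eta>::complex^'i. norm \<eta> \<le> 1 \<and> dt \<phi> p \<le> levi_deg \<phi> p \<eta>)
            else dt \<phi> p \<le> levi \<phi> p)) \<and>
        (loc_min \<Omega> (\<lambda>q. v q - \<phi> q) p \<longrightarrow>
           (if (\<forall>a. dz \<phi> p a = 0)
            then (\<exists>\<eta>::complex^'i. norm \<eta> \<le> 1 \<and> dt \<phi> p \<ge> levi_deg \<phi> p \<eta>)
            else dt \<phi> p \<ge> levi \<phi> p)))"

section \<open>The reduced space C^{n-1} x R with coordinates (x, y'),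
  C^n = complex^('m option): index None is the n-th coordinate, x :: real^('m option), y' :: real^'m\<close>

definition proj :: "complex^('m::finite option) \<Rightarrow> (real^('m option)) \<times> (real^'m)" where
  "proj z = ((\<chi> i. Re (z $ i)), (\<chi> j. Im (z $ Some j)))"

definition embed :: "(real^('m::finite option)) \<times> (real^'m) \<Rightarrow> complex^('m option)" where
  "embed q = (\<chi> i. Complex (fst q $ i) (case i of None \<Rightarrow> 0 | Some j \<Rightarrow> snd q $ j))"

definition lift :: "(((real^('m::finite option)) \<times> (real^'m)) \<times> real \<Rightarrow> real)
                   \<Rightarrow> (complex^('m option)) \<times> real \<Rightarrow> real" where
  "lift \<phi> p = \<phi> (proj (fst p), snd p) - Im (fst p $ None)"

text \<open>H_0(phi)(x,y',t) = H(phi - y_n) evaluated at a point over (x,y') (here y_n = 0)\<close>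
definition levi0 :: "(((real^('m::finite option)) \<times> (real^'m)) \<times> real \<Rightarrow> real)
                   \<Rightarrow> ((real^('m option)) \<times> (real^'m)) \<times> real \<Rightarrow> real" where
  "levi0 \<phi> q = levi (lift \<phi>) (embed (fst q), snd q)"

definition dt0 :: "(((real^('m::finite option)) \<times> (real^'m)) \<times> real \<Rightarrow> real)
                   \<Rightarrow> ((real^('m option)) \<times> (real^'m)) \<times> real \<Rightarrow> real" where
  "dt0 \<phi> q = dirD \<phi> q (0, 1)"

definition weak_sol_H0 :: "(((real^('m::finite option)) \<times> (real^'m)) \<times> real) set
                   \<Rightarrow> (((real^('m option)) \<times> (real^'m)) \<times> real \<Rightarrow> real) \<Rightarrow> bool" where
  "weak_sol_H0 \<Omega> u \<longleftrightarrow> continuous_on \<Omega> u \<and>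
     (\<forall>q\<in>\<Omega>. \<forall>\<phi> U. open U \<and> q \<in> U \<and> smooth_on U \<phi> \<longrightarrow>
        (loc_max \<Omega> (\<lambda>r. u r - \<phi> r) q \<longrightarrow> dt0 \<phi> q \<le> levi0 \<phi> q) \<and>
        (loc_min \<Omega> (\<lambda>r. u r - \<phi> r) q \<longrightarrow> dt0 \<phi> q \<ge> levi0 \<phi> q))"

end

theory Submission
  imports Defs
begin

(* Write z = x + i y in C^n, let prj (z,t) = ((x,y'),t) forget y_n, and let
   v(z,t) = y_n - u(x,y',t).

   1. Calculus at a point: C2_at, and how smoothness and first and second directional
      derivatives behave under affine-quadratic modifications
      a f(A x + c) + l x + d + k (m x + d')^2 with A, l, m linear; the one-dimensional
      second derivative test; local extrema under composition.
   2. The Levi operator as a function levi_of G B of the first and second order data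
      G = D phi(p), B = D^2 phi(p): linear and symmetric in B, even in G, nonnegative
      on rank-one data (Cauchy-Schwarz), and a completing-the-square identity.
   3. The coordinate maps prj, yn, emb; H_0 expressed through levi_of; weak solutions
      tested only by nondegenerate test functions.
   4. (v solves => u solves) A test function psi for u gives the nondegenerate test
      function y_n - psi o prj for v, with opposite time derivative and Levi operator.
   5. (u solves => v solves) At a contact point a test function phi has d phi/d y_n = 1.
      Adding eps (y_n - y_n(p))^2 and composing with the affine section of prj along the
      B-orthogonal complement of e_n gives a test function psi for u whose Levi operator
      is -H(phi) up to a term of favourable sign and an O(eps) error; let eps -> 0. *)

section \<open>Twice differentiable points and affine-quadratic modifications\<close>

text \<open>A function is C2 at p if it is differentiable near p and all its directional
  derivatives are differentiable at p; this is all the pointwise calculus needs.\<close>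
definition C2_at :: "('a::real_normed_vector \<Rightarrow> real) \<Rightarrow> 'a \<Rightarrow> bool" where
  "C2_at f p \<longleftrightarrow> (\<exists>U. open U \<and> p \<in> U \<and> (\<forall>x\<in>U. f differentiable (at x))) \<and>
     (\<forall>v. (\<lambda>x. frechet_derivative f (at x) v) differentiable (at p))"

lemma smooth_on_imp_C2_at:
  assumes "smooth_on U f" "open U" "p \<in> U" shows "C2_at f p"
proof -
  have "Ck_on 2 U f" using assms(1) unfolding smooth_on_def by blast
  then have "\<forall>x\<in>U. f differentiable (at x)"
    and "\<forall>v. \<forall>x\<in>U. (\<lambda>x. frechet_derivative f (at x) v) differentiable (at x)"
    by (simp_all add: numeral_2_eq_2)
  then show ?thesis unfolding C2_at_def using assms(2,3) by blast
qed

lemma Ck_on_cong_open: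
  assumes "open S" shows "(\<forall>x\<in>S. f x = g x) \<Longrightarrow> Ck_on k S f \<Longrightarrow> Ck_on k S g"
proof (induction k arbitrary: f g)
  case 0
  then show ?case by (metis Ck_on.simps(1) continuous_on_cong)
next
  case (Suc k)
  have hd: "(g has_derivative frechet_derivative f (at x)) (at x)" if "x \<in> S" for x
  proof -
    have "(f has_derivative frechet_derivative f (at x)) (at x within UNIV)"
      using Suc.prems(2) that frechet_derivative_works by auto
    from has_derivative_transform_within_open[OF this assms that] Suc.prems(1)
    show ?thesis by auto
  qed
  have fd: "frechet_derivative g (at x) = frechet_derivative f (at x)" if "x \<in> S" for x
    using frechet_derivative_at[OF hd[OF that]] by simp
  have "Ck_on k S (\<lambda>x. frechet_derivative g (at x) v)" for v
    using Suc.IH[of "\<lambda>x. frechet_derivative f (at x) v"] Suc.prems(2) fd by simp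
  moreover have "\<forall>x\<in>S. g differentiable (at x)" using hd by (auto intro: differentiableI)
  ultimately show ?case by simp
qed

text \<open>The derivative of an affine-quadratic modification of f.  All test functions
  built in this file are of this shape.\<close>
lemma affine_quadratic_has_derivative:
  fixes f :: "'b::real_normed_vector \<Rightarrow> real" and A :: "'a::real_normed_vector \<Rightarrow> 'b"
  assumes "f differentiable (at (A x + c))" "bounded_linear A" "bounded_linear l" "bounded_linear m"
  shows "((\<lambda>x. a * f (A x + c) + l x + d + k * (m x + d')\<^sup>2) has_derivative
     (\<lambda>v. a * frechet_derivative f (at (A x + c)) (A v) + l v + 2 * k * (m x + d') * m v)) (at x)"
proof -
  have f: "(f has_derivative frechet_derivative f (at (A x + c))) (at (A x + c))"
    using assms(1) frechet_derivative_works by blast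
  have A: "((\<lambda>x. A x + c) has_derivative A) (at x)"
    using has_derivative_add_const[OF bounded_linear_imp_has_derivative[OF assms(2)]] by blast
  have fA: "((\<lambda>x. f (A x + c)) has_derivative (\<lambda>v. frechet_derivative f (at (A x + c)) (A v))) (at x)"
    using diff_chain_at[OF A f] by (simp add: o_def)
  have m: "((\<lambda>x. m x + d') has_derivative m) (at x)"
    using has_derivative_add_const[OF bounded_linear_imp_has_derivative[OF assms(4)]] by blast
  have sq: "((\<lambda>x. k * (m x + d')\<^sup>2) has_derivative (\<lambda>v. 2 * k * (m x + d') * m v)) (at x)"
    unfolding power2_eq_square
    by (rule has_derivative_eq_rhs[OF has_derivative_mult_right[OF has_derivative_mult[OF m m]]])
      (auto simp: algebra_simps)
  have l: "(l has_derivative l) (at x)" by (rule bounded_linear_imp_has_derivative[OF assms(3)])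
  show ?thesis
    using has_derivative_add[OF has_derivative_add_const[OF has_derivative_add[OF
          has_derivative_mult_right[OF fA] l]] sq] by simp
qed

lemma open_affine_preimage:
  assumes "open U" "bounded_linear A" shows "open {x. A x + c \<in> U}"
proof -
  have "{x. A x + c \<in> U} = (\<lambda>x. A x + c) -` U" by auto
  moreover have "isCont (\<lambda>x. A x + c) x" for x
    using linear_continuous_at[OF assms(2)] by (intro continuous_intros) auto
  ultimately show ?thesis using continuous_open_vimage[OF assms(1)] by metis
qed

text \<open>Each Ck_on, and hence smoothness, is preserved by affine-quadratic modifications;
  differentiating once gives again such a modification of a derivative of f.\<close>
lemma Ck_on_affine_quadratic:
  fixes f :: "'b::real_normed_vector \<Rightarrow> real" and A :: "'a::real_normed_vector \<Rightarrow> 'b"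
  assumes U: "open U" and A: "bounded_linear A" and m: "bounded_linear m"
  shows "Ck_on k U f \<Longrightarrow> bounded_linear l \<Longrightarrow>
    (\<forall>x. g x = a * f (A x + c) + l x + d + \<kappa> * (m x + d')\<^sup>2) \<Longrightarrow> Ck_on k {x. A x + c \<in> U} g"
proof (induction k arbitrary: f l d \<kappa> g a)
  case 0
  have g: "g = (\<lambda>x. a * f (A x + c) + l x + d + \<kappa> * (m x + d')\<^sup>2)" using "0.prems"(3) by auto
  have cA: "continuous_on {x. A x + c \<in> U} (\<lambda>x. A x + c)"
    using linear_continuous_at[OF A] by (intro continuous_intros continuous_at_imp_continuous_on) auto
  have cf: "continuous_on {x. A x + c \<in> U} (\<lambda>x. f (A x + c))"
    using continuous_on_compose2[OF _ cA, of U f] "0.prems"(1) by auto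
  have cl: "continuous_on S l" and cm: "continuous_on S m" for S
    using linear_continuous_at[OF "0.prems"(2)] linear_continuous_at[OF m]
    by (auto intro: continuous_at_imp_continuous_on)
  show ?case unfolding g Ck_on.simps by (intro continuous_intros cf cl cm)
next
  case (Suc k)
  let ?V = "{x. A x + c \<in> U}"
  have g: "g = (\<lambda>x. a * f (A x + c) + l x + d + \<kappa> * (m x + d')\<^sup>2)" using Suc.prems(3) by auto
  have gd: "(g has_derivative (\<lambda>v. a * frechet_derivative f (at (A x + c)) (A v) + l v
      + 2 * \<kappa> * (m x + d') * m v)) (at x)" if "x \<in> ?V" for x
    using Suc.prems(1) that unfolding g
    by (intro affine_quadratic_has_derivative[OF _ A Suc.prems(2) m]) simp
  have Dg: "frechet_derivative g (at x) v = a * frechet_derivative f (at (A x + c)) (A v) + l v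
      + 2 * \<kappa> * (m x + d') * m v" if "x \<in> ?V" for x v
    by (simp add: frechet_derivative_at[OF gd[OF that], symmetric])
  have "Ck_on k ?V (\<lambda>x. frechet_derivative g (at x) v)" for v
  proof -
    have bl: "bounded_linear (\<lambda>x. 2 * \<kappa> * m v * m x)"
      using bounded_linear_compose[OF bounded_linear_mult_right m] by blast
    have "Ck_on k ?V (\<lambda>x. a * frechet_derivative f (at (A x + c)) (A v) + 2 * \<kappa> * m v * m x
        + (l v + 2 * \<kappa> * d' * m v) + 0 * (m x + d')\<^sup>2)"
      by (rule Suc.IH[where f="\<lambda>y. frechet_derivative f (at y) (A v)" and a=a and \<kappa>=0
            and d="l v + 2 * \<kappa> * d' * m v", OF _ bl])
        (use Suc.prems(1) in auto)
    then show ?thesis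
      by (rule Ck_on_cong_open[OF open_affine_preimage[OF U A], rotated]) (auto simp: Dg algebra_simps)
  qed
  moreover have "\<forall>x\<in>?V. g differentiable (at x)" using gd by (auto intro: differentiableI)
  ultimately show ?case by simp
qed

lemma smooth_on_affine_quadratic:
  fixes f :: "'b::real_normed_vector \<Rightarrow> real" and A :: "'a::real_normed_vector \<Rightarrow> 'b"
  assumes "smooth_on U f" "open U" "bounded_linear A" "bounded_linear l" "bounded_linear m"
    and "\<And>x. g x = a * f (A x + c) + l x + d + \<kappa> * (m x + d')\<^sup>2"
  shows "smooth_on {x. A x + c \<in> U} g"
  using assms Ck_on_affine_quadratic[OF assms(2,3,5)] unfolding smooth_on_def by blast

lemma C2_at_affine_quadratic:
  fixes f :: "'b::real_normed_vector \<Rightarrow> real" and A :: "'a::real_normed_vector \<Rightarrow> 'b"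
  assumes C: "C2_at f (A x0 + c)" and A: "bounded_linear A" and l: "bounded_linear l"
    and m: "bounded_linear m"
    and g: "\<And>x. g x = a * f (A x + c) + l x + d + \<kappa> * (m x + d')\<^sup>2"
  shows "C2_at g x0"
    and "dirD g x0 v = a * dirD f (A x0 + c) (A v) + l v + 2 * \<kappa> * (m x0 + d') * m v"
    and "dirD2 g x0 v w = a * dirD2 f (A x0 + c) (A v) (A w) + 2 * \<kappa> * m v * m w"
proof -
  obtain U where U: "open U" "A x0 + c \<in> U" "\<forall>y\<in>U. f differentiable (at y)"
    and F: "\<And>v. (\<lambda>y. frechet_derivative f (at y) v) differentiable (at (A x0 + c))"
    using C unfolding C2_at_def by blast
  let ?V = "{x. A x + c \<in> U}"
  have V: "open ?V" "x0 \<in> ?V" using open_affine_preimage[OF U(1) A] U(2) by auto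
  have gd: "(g has_derivative (\<lambda>v. a * frechet_derivative f (at (A x + c)) (A v) + l v
      + 2 * \<kappa> * (m x + d') * m v)) (at x)" if "x \<in> ?V" for x
  proof -
    have "g = (\<lambda>x. a * f (A x + c) + l x + d + \<kappa> * (m x + d')\<^sup>2)" using g by auto
    then show ?thesis using U(3) that affine_quadratic_has_derivative[OF _ A l m] by simp
  qed
  have Dg: "frechet_derivative g (at x) v = a * frechet_derivative f (at (A x + c)) (A v) + l v
      + 2 * \<kappa> * (m x + d') * m v" if "x \<in> ?V" for x v
    by (simp add: frechet_derivative_at[OF gd[OF that], symmetric])
  have D2g: "((\<lambda>x. frechet_derivative g (at x) v) has_derivative
     (\<lambda>w. a * frechet_derivative (\<lambda>y. frechet_derivative f (at y) (A v)) (at (A x0 + c)) (A w)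
        + 2 * \<kappa> * m v * m w)) (at x0)" for v
  proof -
    have bl: "bounded_linear (\<lambda>x. 2 * \<kappa> * m v * m x)"
      using bounded_linear_compose[OF bounded_linear_mult_right m] by blast
    have "((\<lambda>x. a * frechet_derivative f (at (A x + c)) (A v) + 2 * \<kappa> * m v * m x
          + (l v + 2 * \<kappa> * d' * m v) + 0 * (m x + d')\<^sup>2)
       has_derivative (\<lambda>w. a * frechet_derivative (\<lambda>y. frechet_derivative f (at y) (A v))
          (at (A x0 + c)) (A w) + 2 * \<kappa> * m v * m w + 2 * 0 * (m x0 + d') * m w)) (at x0 within UNIV)"
      by (rule affine_quadratic_has_derivative[OF F A bl m, simplified])
    from has_derivative_transform_within_open[OF this V] show ?thesis
      by (simp add: Dg algebra_simps)
  qed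
  show "C2_at g x0" unfolding C2_at_def using V gd D2g by (auto intro: differentiableI)
  show "dirD g x0 v = a * dirD f (A x0 + c) (A v) + l v + 2 * \<kappa> * (m x0 + d') * m v"
    unfolding dirD_def using Dg V(2) by simp
  show "dirD2 g x0 v w = a * dirD2 f (A x0 + c) (A v) (A w) + 2 * \<kappa> * m v * m w"
    unfolding dirD2_def by (simp add: frechet_derivative_at[OF D2g[of v], symmetric] algebra_simps)
qed

lemma bounded_linear_dirD: "C2_at f p \<Longrightarrow> bounded_linear (dirD f p)"
  unfolding C2_at_def dirD_def
  by (metis frechet_derivative_works has_derivative_bounded_linear eta_contract_eq)

lemma bounded_linear_dirD2_right: "C2_at f p \<Longrightarrow> bounded_linear (dirD2 f p v)"
  unfolding C2_at_def dirD2_def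
  by (metis frechet_derivative_works has_derivative_bounded_linear)

lemma dirD2_linear_left:
  assumes "C2_at f p"
  shows "dirD2 f p (r1 *\<^sub>R v1 + r2 *\<^sub>R v2) w = r1 * dirD2 f p v1 w + r2 * dirD2 f p v2 w"
proof -
  obtain U where U: "open U" "p \<in> U" "\<forall>y\<in>U. f differentiable (at y)"
    and F: "\<And>v. (\<lambda>y. frechet_derivative f (at y) v) differentiable (at p)"
    using assms unfolding C2_at_def by blast
  let ?F = "\<lambda>v y. frechet_derivative f (at y) v"
  have Fd: "(?F v has_derivative frechet_derivative (?F v) (at p)) (at p)" for v
    using F frechet_derivative_works by blast
  have S: "((\<lambda>y. r1 * ?F v1 y + r2 * ?F v2 y) has_derivative
      (\<lambda>w. r1 * frechet_derivative (?F v1) (at p) w + r2 * frechet_derivative (?F v2) (at p) w)) (at p)"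
    by (intro has_derivative_add has_derivative_mult_right Fd)
  have eq: "r1 * ?F v1 y + r2 * ?F v2 y = ?F (r1 *\<^sub>R v1 + r2 *\<^sub>R v2) y" if "y \<in> U" for y
  proof -
    have "linear (frechet_derivative f (at y))"
      using U(3) that frechet_derivative_works has_derivative_linear by blast
    then show ?thesis by (simp add: linear_add linear_scale)
  qed
  have "(?F (r1 *\<^sub>R v1 + r2 *\<^sub>R v2) has_derivative
      (\<lambda>w. r1 * frechet_derivative (?F v1) (at p) w + r2 * frechet_derivative (?F v2) (at p) w)) (at p within UNIV)"
    using has_derivative_transform_within_open[of _ _ p UNIV U, OF _ U(1,2), OF S[simplified] eq] by simp
  then show ?thesis unfolding dirD2_def
    by (simp add: frechet_derivative_at[symmetric])
qed

lemma bounded_linear_dirD2_left: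
  fixes f :: "'a::euclidean_space \<Rightarrow> real"
  assumes "C2_at f p" shows "bounded_linear (\<lambda>v. dirD2 f p v w)"
proof -
  have "linear (\<lambda>v. dirD2 f p v w)"
    by (rule linearI) (use dirD2_linear_left[OF assms, of 1 _ 1 _ w]
        dirD2_linear_left[OF assms, of _ _ 0 _ w] in simp_all)
  then show ?thesis using linear_conv_bounded_linear by blast
qed

lemma dirD2_add_scaleR:
  fixes f :: "'a::euclidean_space \<Rightarrow> real"
  assumes "C2_at f p"
  shows "dirD2 f p (x + t *\<^sub>R y) w = dirD2 f p x w + t * dirD2 f p y w"
    and "dirD2 f p w (x + t *\<^sub>R y) = dirD2 f p w x + t * dirD2 f p w y"
  using dirD2_linear_left[OF assms, of 1 x t y w] bounded_linear_dirD2_right[OF assms, of w]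
  by (simp_all add: bounded_linear.linear linear_add linear_scale)

lemma C2_at_local_max_1d:
  fixes k :: "real \<Rightarrow> real"
  assumes C: "C2_at k x" and mx: "loc_max UNIV k x"
  shows "dirD k x 1 = 0" and "dirD2 k x 1 1 \<le> 0"
proof -
  obtain U where U: "open U" "x \<in> U" "\<forall>y\<in>U. k differentiable (at y)"
    and F: "(\<lambda>y. frechet_derivative k (at y) 1) differentiable (at x)"
    using C unfolding C2_at_def by blast
  obtain r where r: "r > 0" "\<And>s. \<bar>s - x\<bar> < r \<Longrightarrow> k s \<le> k x"
    using mx unfolding loc_max_def dist_real_def by blast
  let ?k1 = "\<lambda>y. frechet_derivative k (at y) 1"
  have real_deriv: "(g has_real_derivative frechet_derivative g (at y) 1) (at y)"
    if "g differentiable (at y)" for g :: "real \<Rightarrow> real" and y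
  proof -
    have "(g has_derivative frechet_derivative g (at y)) (at y)"
      using that frechet_derivative_works by blast
    moreover have "frechet_derivative g (at y) s = s * frechet_derivative g (at y) 1" for s
      using linear_scale[OF has_derivative_linear[OF calculation], of s 1] by simp
    ultimately show ?thesis by (metis has_derivative_imp_has_field_derivative)
  qed
  have D: "(k has_real_derivative ?k1 s) (at s)" if "s \<in> U" for s
    using U(3) that real_deriv by blast
  have D0: "?k1 x = 0"
    by (rule DERIV_local_max[OF D[OF U(2)] r(1)]) (use r(2) in \<open>auto simp: dist_real_def\<close>)
  then show "dirD k x 1 = 0" by (simp add: dirD_def)
  show "dirD2 k x 1 1 \<le> 0"
  proof (rule ccontr)
    assume "\<not> dirD2 k x 1 1 \<le> 0"
    then have pos: "0 < frechet_derivative ?k1 (at x) 1" by (simp add: dirD2_def)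
    obtain d where d: "d > 0" "\<And>h. h > 0 \<Longrightarrow> h < d \<Longrightarrow> ?k1 x < ?k1 (x + h)"
      using DERIV_pos_inc_right[OF real_deriv[OF F] pos] by blast
    obtain e where e: "e > 0" "ball x e \<subseteq> U" using U(1,2) open_contains_ball by blast
    define s where "s = min d (min r e) / 2"
    have s: "0 < s" "s < d" "s < r" "s < e" using d(1) r(1) e(1) by (auto simp: s_def)
    have "\<exists>z>x. z < x + s \<and> k (x + s) - k x = (x + s - x) * ?k1 z"
    proof (rule MVT2)
      fix y :: real assume "x \<le> y" "y \<le> x + s"
      then have "y \<in> U" using e(2) s(4) by (auto simp: dist_real_def)
      then show "(k has_real_derivative ?k1 y) (at y)" by (rule D)
    qed (use s in simp)
    then obtain z where z: "x < z" "z < x + s" "k (x + s) - k x = s * ?k1 z" by auto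
    have "?k1 z > 0" using d(2)[of "z - x"] z s D0 by simp
    then have "k (x + s) > k x" using z(3) s(1) by (simp add: algebra_simps)
    moreover have "k (x + s) \<le> k x" using r(2)[of "x + s"] s by simp
    ultimately show False by simp
  qed
qed

lemma loc_max_uminus: "loc_max S (\<lambda>x. - g x) p \<longleftrightarrow> loc_min S g p"
  by (simp add: loc_max_def loc_min_def)

lemma loc_min_uminus: "loc_min S (\<lambda>x. - g x) p \<longleftrightarrow> loc_max S g p"
  by (simp add: loc_max_def loc_min_def)

lemma loc_max_compose:
  assumes "loc_max S g (F p)" "isCont F p" "\<And>x. x \<in> T \<Longrightarrow> F x \<in> S"
  shows "loc_max T (\<lambda>x. g (F x)) p"
proof -
  obtain r where r: "r > 0" "\<forall>y\<in>S. dist y (F p) < r \<longrightarrow> g y \<le> g (F p)"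
    using assms(1) unfolding loc_max_def by blast
  obtain d where "d > 0" "\<And>x. dist x p < d \<Longrightarrow> dist (F x) (F p) < r"
    using assms(2) r(1) unfolding continuous_at_eps_delta by blast
  then show ?thesis unfolding loc_max_def using r assms(3) by blast
qed

lemma loc_min_compose:
  assumes "loc_min S g (F p)" "isCont F p" "\<And>x. x \<in> T \<Longrightarrow> F x \<in> S"
  shows "loc_min T (\<lambda>x. g (F x)) p"
  using loc_max_compose[of S "\<lambda>x. - g x" F p T] assms by (simp add: loc_max_uminus)

lemma loc_min_signed:
  assumes "\<sigma> = 1 \<or> \<sigma> = -1"
  shows "loc_min S (\<lambda>x. \<sigma> * g x) p \<longleftrightarrow> (if \<sigma> = 1 then loc_min S g p else loc_max S g p)"
  using assms loc_min_uminus[of S g p] by auto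

section \<open>The Levi operator as a function of first and second order data\<close>

text \<open>For a linear form G (playing the role of D phi(p)) and a bilinear form B (playing
  the role of D^2 phi(p)), dz_of G gives the complex gradient, hess_of B the complex Hessian
  and levi_of G B the Levi operator.\<close>
definition dz_of :: "((complex^'i::finite) \<times> real \<Rightarrow> real) \<Rightarrow> 'i \<Rightarrow> complex" where
  "dz_of G a = (complex_of_real (G (ex a)) - \<i> * complex_of_real (G (ey a))) / 2"

definition hess_of :: "((complex^'i::finite) \<times> real \<Rightarrow> (complex^'i) \<times> real \<Rightarrow> real) \<Rightarrow> 'i \<Rightarrow> 'i \<Rightarrow> complex" where
  "hess_of B a b = (complex_of_real (B (ex b) (ex a)) + \<i> * complex_of_real (B (ey b) (ex a))
      - \<i> * complex_of_real (B (ex b) (ey a)) + complex_of_real (B (ey b) (ey a))) / 4"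

definition gradsq_of :: "((complex^'i::finite) \<times> real \<Rightarrow> real) \<Rightarrow> real" where
  "gradsq_of G = (\<Sum>a\<in>UNIV. (cmod (dz_of G a))\<^sup>2)"

definition levi_coeff :: "((complex^'i::finite) \<times> real \<Rightarrow> real) \<Rightarrow> 'i \<Rightarrow> 'i \<Rightarrow> complex" where
  "levi_coeff G a b =
     (if a = b then 1 else 0) - dz_of G a * cnj (dz_of G b) / complex_of_real (gradsq_of G)"

definition levi_of :: "((complex^'i::finite) \<times> real \<Rightarrow> real) \<Rightarrow>
    ((complex^'i) \<times> real \<Rightarrow> (complex^'i) \<times> real \<Rightarrow> real) \<Rightarrow> real" where
  "levi_of G B = Re (\<Sum>a\<in>UNIV. \<Sum>b\<in>UNIV. levi_coeff G a b * hess_of B a b)"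

lemma levi_eq_levi_of: "levi f p = levi_of (dirD f p) (dirD2 f p)"
proof -
  have dz: "dz f p a = dz_of (dirD f p) a" for a by (simp add: dz_def dz_of_def)
  have dzb: "dzb f p a = cnj (dz_of (dirD f p) a)" for a
    by (simp add: dzb_def dz_of_def complex_eq_iff)
  have "gradsq f p = gradsq_of (dirD f p)" by (simp add: gradsq_def gradsq_of_def dz)
  moreover have "dzdzb f p a b = hess_of (dirD2 f p) a b" for a b by (simp add: dzdzb_def hess_of_def)
  ultimately show ?thesis unfolding levi_def levi_of_def levi_coeff_def dz dzb by simp
qed

lemma levi_of_uminus_grad: "levi_of (\<lambda>v. - G v) B = levi_of G B"
proof -
  have "dz_of (\<lambda>v. - G v) a = - dz_of G a" for a by (simp add: dz_of_def complex_eq_iff)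
  then have "levi_coeff (\<lambda>v. - G v) a b = levi_coeff G a b" for a b
    by (simp add: levi_coeff_def gradsq_of_def)
  then show ?thesis by (simp add: levi_of_def)
qed

lemma levi_of_add: "levi_of G (\<lambda>v w. B1 v w + B2 v w) = levi_of G B1 + levi_of G B2"
proof -
  have "hess_of (\<lambda>v w. B1 v w + B2 v w) a b = hess_of B1 a b + hess_of B2 a b" for a b
    by (simp add: hess_of_def algebra_simps add_divide_distrib[symmetric])
  then show ?thesis by (simp add: levi_of_def distrib_left sum.distrib)
qed

lemma levi_of_scale: "levi_of G (\<lambda>v w. r * B v w) = r * levi_of G B"
proof -
  have "hess_of (\<lambda>v w. r * B v w) a b = complex_of_real r * hess_of B a b" for a b
    by (simp add: hess_of_def algebra_simps)
  then have "(\<Sum>a\<in>UNIV. \<Sum>b\<in>UNIV. levi_coeff G a b * hess_of (\<lambda>v w. r * B v w) a b) =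
      complex_of_real r * (\<Sum>a\<in>UNIV. \<Sum>b\<in>UNIV. levi_coeff G a b * hess_of B a b)"
    by (simp add: sum_distrib_left algebra_simps)
  then show ?thesis by (simp add: levi_of_def)
qed

lemma levi_of_uminus: "levi_of G (\<lambda>v w. - B v w) = - levi_of G B"
  using levi_of_scale[of G "-1" B] by simp

text \<open>Both the coefficient matrix and the Hessian are Hermitian, so the Levi operator
  only sees the symmetric part of B.\<close>
lemma levi_of_transpose: "levi_of G (\<lambda>v w. B w v) = levi_of G B"
proof -
  have hess: "hess_of (\<lambda>v w. B w v) a b = cnj (hess_of B b a)" for a b
    by (simp add: hess_of_def complex_eq_iff)
  have coeff: "levi_coeff G a b = cnj (levi_coeff G b a)" for a b
    by (simp add: levi_coeff_def ac_simps)
  have "(\<Sum>a\<in>UNIV. \<Sum>b\<in>UNIV. levi_coeff G a b * hess_of (\<lambda>v w. B w v) a b) =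
        (\<Sum>a\<in>UNIV. \<Sum>b\<in>UNIV. cnj (levi_coeff G b a * hess_of B b a))"
    by (intro sum.cong refl, subst coeff) (simp add: hess)
  also have "\<dots> = cnj (\<Sum>a\<in>UNIV. \<Sum>b\<in>UNIV. levi_coeff G b a * hess_of B b a)"
    by (simp add: cnj_sum)
  also have "\<dots> = cnj (\<Sum>b\<in>UNIV. \<Sum>a\<in>UNIV. levi_coeff G b a * hess_of B b a)"
    by (subst sum.swap) (rule refl)
  finally show ?thesis by (simp add: levi_of_def)
qed

lemma levi_of_symmetrize: "levi_of G S = levi_of G (\<lambda>v w. (1/2) * (S v w + S w v))"
proof -
  have "levi_of G (\<lambda>v w. (1/2) * (S v w + S w v)) = (1/2) * (levi_of G S + levi_of G (\<lambda>v w. S w v))"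
    by (simp only: levi_of_scale levi_of_add)
  then show ?thesis using levi_of_transpose[of G S] by simp
qed

text \<open>Cauchy-Schwarz: the Hermitian form of the Levi coefficient matrix is nonnegative.\<close>
lemma levi_coeff_form_nonneg:
  fixes w l :: "'i::finite \<Rightarrow> complex"
  shows "0 \<le> Re (\<Sum>a\<in>UNIV. \<Sum>b\<in>UNIV. ((if a = b then 1 else 0)
           - w a * cnj (w b) / complex_of_real (\<Sum>c\<in>UNIV. (cmod (w c))\<^sup>2)) * (l a * cnj (l b)))"
proof -
  define g where "g = (\<Sum>c\<in>UNIV. (cmod (w c))\<^sup>2)"
  define S where "S = (\<Sum>a\<in>UNIV. w a * l a)"
  define N where "N = (\<Sum>a\<in>UNIV. (cmod (l a))\<^sup>2)"
  have identity_part: "(\<Sum>a\<in>UNIV. \<Sum>b\<in>UNIV. (if a = b then 1 else 0) * (l a * cnj (l b)))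
      = complex_of_real N"
  proof -
    have "(\<Sum>a\<in>UNIV. \<Sum>b\<in>UNIV. (if a = b then 1 else 0) * (l a * cnj (l b)))
        = (\<Sum>a\<in>UNIV. complex_of_real ((cmod (l a))\<^sup>2))"
    proof -
      have delta: "(if a = b then 1 else 0) * X = (if a = b then X else 0)"
        for a b :: 'i and X :: complex by simp
      show ?thesis by (simp only: delta sum.delta' finite UNIV_I if_True complex_norm_square)
    qed
    then show ?thesis by (simp only: N_def of_real_sum)
  qed
  have projection_part: "(\<Sum>a\<in>UNIV. \<Sum>b\<in>UNIV. w a * cnj (w b) / complex_of_real g * (l a * cnj (l b)))
      = complex_of_real ((cmod S)\<^sup>2 / g)"
  proof -
    have "(\<Sum>a\<in>UNIV. \<Sum>b\<in>UNIV. w a * cnj (w b) / complex_of_real g * (l a * cnj (l b)))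
        = (\<Sum>a\<in>UNIV. \<Sum>b\<in>UNIV. (w a * l a) * cnj (w b * l b)) / complex_of_real g"
      by (simp add: sum_divide_distrib algebra_simps)
    also have "(\<Sum>a\<in>UNIV. \<Sum>b\<in>UNIV. (w a * l a) * cnj (w b * l b)) = S * cnj S"
      by (simp add: S_def sum_product cnj_sum)
    finally show ?thesis by (simp only: complex_norm_square of_real_divide)
  qed
  have cauchy_schwarz: "(cmod S)\<^sup>2 \<le> g * N"
  proof -
    have "cmod S \<le> (\<Sum>a\<in>UNIV. cmod (w a) * cmod (l a))"
      unfolding S_def by (rule order_trans[OF norm_sum]) (simp add: norm_mult)
    also have "\<dots> \<le> L2_set (\<lambda>a. cmod (w a)) UNIV * L2_set (\<lambda>a. cmod (l a)) UNIV"
      using L2_set_mult_ineq[of "\<lambda>a. cmod (w a)" "\<lambda>a. cmod (l a)" UNIV] by simp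
    finally have "(cmod S)\<^sup>2 \<le> (L2_set (\<lambda>a. cmod (w a)) UNIV * L2_set (\<lambda>a. cmod (l a)) UNIV)\<^sup>2"
      by (simp add: power_mono)
    also have "\<dots> = g * N"
      by (simp add: power_mult_distrib L2_set_def g_def N_def sum_nonneg)
    finally show ?thesis .
  qed
  have "0 \<le> N - (cmod S)\<^sup>2 / g"
  proof (cases "g = 0")
    case True then show ?thesis by (simp add: N_def sum_nonneg)
  next
    case False
    moreover have "0 \<le> g" by (simp add: g_def sum_nonneg)
    ultimately show ?thesis using cauchy_schwarz by (simp add: divide_le_eq mult.commute)
  qed
  moreover have "(\<Sum>a\<in>UNIV. \<Sum>b\<in>UNIV. ((if a = b then 1 else 0)
           - w a * cnj (w b) / complex_of_real g) * (l a * cnj (l b))) =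
       complex_of_real (N - (cmod S)\<^sup>2 / g)"
    by (simp only: left_diff_distrib sum_subtractf identity_part projection_part of_real_diff)
  ultimately show ?thesis by (simp add: g_def)
qed

lemma levi_of_rank_one_nonneg: "0 \<le> levi_of G (\<lambda>v w. c v * c w)"
proof -
  have "hess_of (\<lambda>v w. c v * c w) a b = dz_of c a * cnj (dz_of c b)" for a b
    by (simp add: hess_of_def dz_of_def complex_eq_iff algebra_simps)
  then show ?thesis
    unfolding levi_of_def levi_coeff_def gradsq_of_def by (simp only: levi_coeff_form_nonneg)
qed

lemma levi_of_complete_square:
  fixes Be :: "(complex^'i::finite) \<times> real \<Rightarrow> (complex^'i) \<times> real \<Rightarrow> real"
  assumes B1: "\<And>v w. B1 v w = - Be (v + a v *\<^sub>R e) (w + a w *\<^sub>R e)"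
    and lin1: "\<And>x y t w. Be (x + t *\<^sub>R y) w = Be x w + t * Be y w"
    and lin2: "\<And>v x y t. Be v (x + t *\<^sub>R y) = Be v x + t * Be v y"
    and g: "\<And>v. g v = (Be v e + Be e v) / 2" and c: "c \<noteq> 0" "Be e e = c"
    and a: "\<And>v. a v = - g v / c"
  shows "levi_of G B1 = levi_of G (\<lambda>v w. - Be v w) + (1/c) * levi_of G (\<lambda>v w. g v * g w)"
proof -
  define S where "S = (\<lambda>v w. - (a w * Be v e + a v * Be e w + a v * a w * Be e e))"
  have B1_split: "B1 = (\<lambda>v w. - Be v w + S v w)"
  proof (intro ext)
    fix v w
    have "Be (v + a v *\<^sub>R e) (w + a w *\<^sub>R e) = Be v w + a w * Be v e + a v * (Be e w + a w * Be e e)"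
      by (simp add: lin1 lin2 algebra_simps)
    then show "B1 v w = - Be v w + S v w" by (simp add: B1 S_def algebra_simps)
  qed
  have S_sym: "(\<lambda>v w. (1/2) * (S v w + S w v)) = (\<lambda>v w. (1/c) * (g v * g w))"
  proof (intro ext)
    fix v w
    have "(1/2) * (S v w + S w v) = - (a w * g v + a v * g w + a v * a w * c)"
      by (simp add: S_def g c(2) algebra_simps add_divide_distrib)
    also have "\<dots> = (1/c) * (g v * g w)"
      using c(1) by (simp add: a field_simps power2_eq_square)
    finally show "(1/2) * (S v w + S w v) = (1/c) * (g v * g w)" .
  qed
  have "levi_of G B1 = levi_of G (\<lambda>v w. - Be v w) + levi_of G S"
    unfolding B1_split using levi_of_add[of G "\<lambda>v w. - Be v w" S] by simp
  also have "levi_of G S = (1/c) * levi_of G (\<lambda>v w. g v * g w)"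
    using levi_of_symmetrize[of G S] levi_of_scale[of G "1/c" "\<lambda>v w. g v * g w"] unfolding S_sym by simp
  finally show ?thesis .
qed

definition prj :: "(complex^('m::finite option)) \<times> real \<Rightarrow> ((real^('m option)) \<times> (real^'m)) \<times> real" where
  "prj x = (proj (fst x), snd x)"

definition yn :: "(complex^('m::finite option)) \<times> real \<Rightarrow> real" where
  "yn x = Im (fst x $ None)"

definition emb :: "((real^('m::finite option)) \<times> (real^'m)) \<times> real \<Rightarrow> (complex^('m option)) \<times> real" where
  "emb q = (embed (fst q), snd q)"

lemma bounded_linear_prj: "bounded_linear (prj :: (complex^('m::finite option)) \<times> real \<Rightarrow> _)"
  by (rule linear_conv_bounded_linear[THEN iffD1], rule linearI) (auto simp: prj_def proj_def vec_eq_iff)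

lemma bounded_linear_yn: "bounded_linear (yn :: (complex^('m::finite option)) \<times> real \<Rightarrow> _)"
  by (rule linear_conv_bounded_linear[THEN iffD1], rule linearI) (auto simp: yn_def)

lemma bounded_linear_emb: "bounded_linear (emb :: _ \<Rightarrow> (complex^('m::finite option)) \<times> real)"
  by (rule linear_conv_bounded_linear[THEN iffD1], rule linearI)
    (auto simp: emb_def embed_def vec_eq_iff complex_eq_iff split: option.split)

lemma prj_emb [simp]: "prj (emb q) = q"
  by (auto simp: prj_def emb_def proj_def embed_def vec_eq_iff prod_eq_iff)

lemma yn_emb [simp]: "yn (emb q) = 0"
  by (simp add: yn_def emb_def embed_def)

lemma emb_prj_yn: "x = emb (prj x) + yn x *\<^sub>R ey None"
  by (auto simp: prod_eq_iff vec_eq_iff emb_def prj_def yn_def embed_def proj_def ey_def axis_def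
       complex_eq_iff split: option.split)

lemma prj_add [simp]: "prj (x + y) = prj x + prj y"
  by (simp add: prj_def proj_def vec_eq_iff)

lemma prj_scaleR [simp]: "prj (t *\<^sub>R y) = t *\<^sub>R prj y"
  by (simp add: prj_def proj_def vec_eq_iff)

lemma yn_add [simp]: "yn (x + y) = yn x + yn y"
  by (simp add: yn_def)

lemma yn_scaleR [simp]: "yn (t *\<^sub>R y) = t * yn y"
  by (simp add: yn_def)

lemma prj_ey_None [simp]: "prj (ey None) = 0"
  by (simp add: prj_def ey_def proj_def axis_def vec_eq_iff zero_prod_def)

lemma yn_ey [simp]: "yn (ey a) = (if a = None then 1 else 0)"
  by (simp add: yn_def ey_def axis_def)

lemma yn_et [simp]: "yn et = 0"
  by (simp add: yn_def et_def)

lemma prj_et [simp]: "prj et = (0, 1)"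
  by (simp add: prj_def et_def proj_def vec_eq_iff zero_prod_def)

lemma emb_time_direction: "emb (0, 1) = et"
  by (simp add: emb_def et_def embed_def vec_eq_iff complex_eq_iff zero_prod_def split: option.split)

lemma mem_cylinder: "x \<in> {p. proj (fst p) \<in> D \<and> snd p > 0} \<longleftrightarrow> prj x \<in> D \<times> {0<..}"
  by (auto simp: prj_def)

lemma weak_sol_H_nondegenerate_contact:
  assumes "weak_sol_H \<Omega> v" "p \<in> \<Omega>" "open U" "p \<in> U" "smooth_on U \<phi>"
    and nd: "\<not> (\<forall>a. dz \<phi> p a = 0)"
  shows "loc_max \<Omega> (\<lambda>x. v x - \<phi> x) p \<Longrightarrow> dt \<phi> p \<le> levi \<phi> p"
    and "loc_min \<Omega> (\<lambda>x. v x - \<phi> x) p \<Longrightarrow> levi \<phi> p \<le> dt \<phi> p"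
proof -
  have "(loc_max \<Omega> (\<lambda>x. v x - \<phi> x) p \<longrightarrow>
           (if (\<forall>a. dz \<phi> p a = 0) then (\<exists>\<eta>. norm \<eta> \<le> 1 \<and> dt \<phi> p \<le> levi_deg \<phi> p \<eta>)
            else dt \<phi> p \<le> levi \<phi> p)) \<and>
        (loc_min \<Omega> (\<lambda>x. v x - \<phi> x) p \<longrightarrow>
           (if (\<forall>a. dz \<phi> p a = 0) then (\<exists>\<eta>. norm \<eta> \<le> 1 \<and> dt \<phi> p \<ge> levi_deg \<phi> p \<eta>)
            else dt \<phi> p \<ge> levi \<phi> p))"
    using assms(1-5) unfolding weak_sol_H_def by blast
  then show "loc_max \<Omega> (\<lambda>x. v x - \<phi> x) p \<Longrightarrow> dt \<phi> p \<le> levi \<phi> p"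
    and "loc_min \<Omega> (\<lambda>x. v x - \<phi> x) p \<Longrightarrow> levi \<phi> p \<le> dt \<phi> p"
    unfolding if_not_P[OF nd] by simp_all
qed

lemma weak_sol_H_if_nondegenerate_contacts:
  assumes "continuous_on \<Omega> v"
    and max: "\<And>p \<phi> U. p \<in> \<Omega> \<Longrightarrow> open U \<Longrightarrow> p \<in> U \<Longrightarrow> smooth_on U \<phi> \<Longrightarrow>
      loc_max \<Omega> (\<lambda>x. v x - \<phi> x) p \<Longrightarrow> \<not> (\<forall>a. dz \<phi> p a = 0) \<and> dt \<phi> p \<le> levi \<phi> p"
    and min: "\<And>p \<phi> U. p \<in> \<Omega> \<Longrightarrow> open U \<Longrightarrow> p \<in> U \<Longrightarrow> smooth_on U \<phi> \<Longrightarrow>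
      loc_min \<Omega> (\<lambda>x. v x - \<phi> x) p \<Longrightarrow> \<not> (\<forall>a. dz \<phi> p a = 0) \<and> levi \<phi> p \<le> dt \<phi> p"
  shows "weak_sol_H \<Omega> v"
  unfolding weak_sol_H_def using assms(1) max min by (auto simp del: not_all)

lemma dz_nonzero_if_normal_derivative:
  assumes "dirD \<phi> p (ey None) \<noteq> 0" shows "\<not> (\<forall>a. dz \<phi> p a = 0)"
  using assms by (auto simp: dz_def complex_eq_iff)

text \<open>H_0 in terms of the data of psi itself: the lift psi o prj - y_n has first
  derivative D psi(q) o prj - dy_n and second derivative D^2 psi(q)(prj ., prj .) at emb q.\<close>
lemma levi0_eq_levi_of:
  assumes "C2_at \<psi> q"
  shows "levi0 \<psi> q = levi_of (\<lambda>w. dirD \<psi> q (prj w) - yn w) (\<lambda>v w. dirD2 \<psi> q (prj v) (prj w))"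
proof -
  have lift_form: "lift \<psi> x = 1 * \<psi> (prj x + 0) + (- yn x) + 0 + 0 * (yn x + 0)\<^sup>2" for x
    by (simp add: lift_def prj_def yn_def)
  have C: "C2_at \<psi> (prj (emb q) + 0)" using assms by simp
  note Dlift = C2_at_affine_quadratic(2,3)[OF C bounded_linear_prj
      bounded_linear_minus[OF bounded_linear_yn] bounded_linear_yn lift_form]
  have "dirD (lift \<psi>) (emb q) = (\<lambda>w. dirD \<psi> q (prj w) - yn w)"
    and "dirD2 (lift \<psi>) (emb q) = (\<lambda>v w. dirD2 \<psi> q (prj v) (prj w))"
    by (simp_all add: fun_eq_iff Dlift)
  moreover have "levi0 \<psi> q = levi (lift \<psi>) (emb q)" by (simp add: levi0_def emb_def)
  ultimately show ?thesis by (simp only: levi_eq_levi_of)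
qed

section \<open>From solutions for v to solutions for u\<close>

lemma lifted_test_function:
  fixes \<psi> :: "((real^('m::finite option)) \<times> (real^'m)) \<times> real \<Rightarrow> real"
  assumes U: "open U" "q \<in> U" and sm: "smooth_on U \<psi>"
  defines "\<phi> \<equiv> \<lambda>x. yn x - \<psi> (prj x)"
  shows "open {x. prj x \<in> U}" and "smooth_on {x. prj x \<in> U} \<phi>"
    and "dt \<phi> (emb q) = - dt0 \<psi> q" and "levi \<phi> (emb q) = - levi0 \<psi> q"
    and "\<not> (\<forall>a. dz \<phi> (emb q) a = 0)"
proof -
  have \<phi>: "\<phi> x = (-1) * \<psi> (prj x + 0) + yn x + 0 + 0 * (yn x + 0)\<^sup>2" for x
    by (simp add: \<phi>_def)
  show "open {x. prj x \<in> U}"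
    using open_affine_preimage[OF U(1) bounded_linear_prj, of 0] by simp
  show "smooth_on {x. prj x \<in> U} \<phi>"
    using smooth_on_affine_quadratic[OF sm U(1) bounded_linear_prj bounded_linear_yn bounded_linear_yn \<phi>]
    by simp
  have C: "C2_at \<psi> (prj (emb q) + 0)" using smooth_on_imp_C2_at[OF sm U(1,2)] by simp
  note D\<phi> = C2_at_affine_quadratic(2,3)[OF C bounded_linear_prj bounded_linear_yn bounded_linear_yn \<phi>]
  have "dirD \<phi> (emb q) = (\<lambda>v. - (dirD \<psi> q (prj v) - yn v))"
    and "dirD2 \<phi> (emb q) = (\<lambda>v w. - dirD2 \<psi> q (prj v) (prj w))"
    by (simp_all add: D\<phi> fun_eq_iff)
  moreover have "levi0 \<psi> q = levi_of (\<lambda>w. dirD \<psi> q (prj w) - yn w) (\<lambda>v w. dirD2 \<psi> q (prj v) (prj w))"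
    using levi0_eq_levi_of C by simp
  ultimately show "levi \<phi> (emb q) = - levi0 \<psi> q"
    by (simp only: levi_eq_levi_of levi_of_uminus_grad levi_of_uminus)
  show "dt \<phi> (emb q) = - dt0 \<psi> q" by (simp add: dt_def dt0_def D\<phi>)
  have "linear (dirD \<psi> q)" using bounded_linear_dirD[OF C] by (simp add: bounded_linear.linear)
  then have "dirD \<phi> (emb q) (ey None) = 1" by (simp add: D\<phi> linear_0)
  then show "\<not> (\<forall>a. dz \<phi> (emb q) a = 0)" by (simp add: dz_nonzero_if_normal_derivative)
qed

text \<open>First direction: if v is a weak solution of v_t = H(v), then u is a weak solution
  of u_t = H_0(u).  Contacts of u with psi become contacts of v with y_n - psi o prj.\<close>
lemma weak_sol_H0_if_weak_sol_H:
  fixes D :: "((real^('m::finite option)) \<times> (real^'m)) set"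
    and u :: "((real^('m option)) \<times> (real^'m)) \<times> real \<Rightarrow> real"
  assumes wH: "weak_sol_H {p. proj (fst p) \<in> D \<and> snd p > 0}
           (\<lambda>p. Im (fst p $ None) - u (proj (fst p), snd p))"
    and cu: "continuous_on (D \<times> {0<..}) u"
  shows "weak_sol_H0 (D \<times> {0<..}) u"
proof -
  let ?\<Omega> = "{p. proj (fst p) \<in> D \<and> snd p > 0} :: ((complex^('m option)) \<times> real) set"
  let ?v = "\<lambda>p::(complex^('m option)) \<times> real. Im (fst p $ None) - u (proj (fst p), snd p)"
  let ?Dt = "D \<times> {0<..}"
  have "(loc_max ?Dt (\<lambda>r. u r - \<psi> r) q \<longrightarrow> dt0 \<psi> q \<le> levi0 \<psi> q) \<and>
        (loc_min ?Dt (\<lambda>r. u r - \<psi> r) q \<longrightarrow> dt0 \<psi> q \<ge> levi0 \<psi> q)"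
    if q: "q \<in> ?Dt" and U: "open U" "q \<in> U" and sm: "smooth_on U \<psi>" for q \<psi> U
  proof -
    define \<phi> where "\<phi> = (\<lambda>x. yn x - \<psi> (prj x))"
    note lifted = lifted_test_function[OF U sm, folded \<phi>_def]
    have pO: "emb q \<in> ?\<Omega>" using q by (subst mem_cylinder) simp
    have pU: "emb q \<in> {x. prj x \<in> U}" using U(2) by simp
    note W = weak_sol_H_nondegenerate_contact[OF wH pO lifted(1) pU lifted(2,5)]
    have v_minus_\<phi>: "(\<lambda>x. ?v x - \<phi> x) = (\<lambda>x. - (u (prj x) - \<psi> (prj x)))"
      by (auto simp: \<phi>_def yn_def prj_def)
    have prj_maps: "prj x \<in> ?Dt" if "x \<in> ?\<Omega>" for x using that mem_cylinder by blast
    have isc: "isCont prj (emb q)" by (rule linear_continuous_at[OF bounded_linear_prj])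
    show ?thesis
    proof (intro conjI impI)
      assume "loc_max ?Dt (\<lambda>r. u r - \<psi> r) q"
      then have "loc_max ?\<Omega> (\<lambda>x. u (prj x) - \<psi> (prj x)) (emb q)"
        by (intro loc_max_compose[OF _ isc prj_maps]) simp
      then have "loc_min ?\<Omega> (\<lambda>x. ?v x - \<phi> x) (emb q)"
        by (simp only: v_minus_\<phi> loc_min_uminus)
      then show "dt0 \<psi> q \<le> levi0 \<psi> q" using W(2) lifted(3,4) by simp
    next
      assume "loc_min ?Dt (\<lambda>r. u r - \<psi> r) q"
      then have "loc_min ?\<Omega> (\<lambda>x. u (prj x) - \<psi> (prj x)) (emb q)"
        by (intro loc_min_compose[OF _ isc prj_maps]) simp
      then have "loc_max ?\<Omega> (\<lambda>x. ?v x - \<phi> x) (emb q)"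
        by (simp only: v_minus_\<phi> loc_max_uminus)
      then show "dt0 \<psi> q \<ge> levi0 \<psi> q" using W(1) lifted(3,4) by simp
    qed
  qed
  then show ?thesis unfolding weak_sol_H0_def using cu by blast
qed

section \<open>From solutions for u to solutions for v\<close>

text \<open>If sigma (y_n - w o prj - phi) has a local maximum at p on a set invariant under
  translations in y_n, then the restriction of phi to the y_n-line through p touches
  s - const from one side: hence d phi/d y_n = 1 and sigma d^2 phi/d y_n^2 >= 0.\<close>
lemma normal_derivative_at_contact:
  fixes \<phi> :: "(complex^('m::finite option)) \<times> real \<Rightarrow> real"
  assumes \<sigma>: "\<sigma> = 1 \<or> \<sigma> = -1" and C: "C2_at \<phi> p"
    and \<Omega>: "\<And>x s. x \<in> \<Omega> \<Longrightarrow> s *\<^sub>R ey None + x \<in> \<Omega>" and p: "p \<in> \<Omega>"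
    and mx: "loc_max \<Omega> (\<lambda>x. \<sigma> * ((yn x - w (prj x)) - \<phi> x)) p"
  shows "dirD \<phi> p (ey None) = 1" and "0 \<le> \<sigma> * dirD2 \<phi> p (ey None) (ey None)"
proof -
  let ?line = "\<lambda>s::real. s *\<^sub>R (ey None :: (complex^('m option)) \<times> real)"
  define k where "k = (\<lambda>s. (-\<sigma>) * \<phi> (?line s + p) + \<sigma> * s + 0 + 0 * (\<sigma> * s + 0)\<^sup>2)"
  have k_form: "k s = (-\<sigma>) * \<phi> (?line s + p) + \<sigma> * s + 0 + 0 * (\<sigma> * s + 0)\<^sup>2" for s
    by (simp add: k_def)
  have bl_line: "bounded_linear ?line" by (rule bounded_linear_scaleR_left)
  have bl_\<sigma>: "bounded_linear (\<lambda>s::real. \<sigma> * s)" by (rule bounded_linear_mult_right)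
  have C0: "C2_at \<phi> (?line 0 + p)" using C by simp
  note Dk = C2_at_affine_quadratic[OF C0 bl_line bl_\<sigma> bl_\<sigma> k_form]
  have "loc_max UNIV (\<lambda>s. \<sigma> * ((yn (?line s + p) - w (prj (?line s + p))) - \<phi> (?line s + p))) 0"
  proof (rule loc_max_compose[where F="\<lambda>s. ?line s + p"])
    show "isCont (\<lambda>s. ?line s + p) 0"
      by (intro continuous_add linear_continuous_at[OF bl_line] continuous_const)
  qed (use mx \<Omega> p in simp_all)
  moreover have "\<sigma> * ((yn (?line s + p) - w (prj (?line s + p))) - \<phi> (?line s + p))
      = k s + \<sigma> * (yn p - w (prj p))" for s
    by (simp add: k_def algebra_simps)
  moreover have "\<sigma> * ((yn p - w (prj p)) - \<phi> p) = k 0 + \<sigma> * (yn p - w (prj p))"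
    by (simp add: k_def algebra_simps)
  ultimately have "loc_max UNIV k 0"
    by (simp add: loc_max_def)
  note extremum = C2_at_local_max_1d[OF Dk(1) this]
  from extremum(1) have "\<sigma> * (1 - dirD \<phi> p (ey None)) = 0"
    by (simp add: Dk(2) algebra_simps)
  then show "dirD \<phi> p (ey None) = 1" using \<sigma> by auto
  from extremum(2) show "0 \<le> \<sigma> * dirD2 \<phi> p (ey None) (ey None)" by (simp add: Dk(3))
qed

lemma affine_section_of_prj:
  fixes p :: "(complex^('m::finite option)) \<times> real"
  assumes \<Lambda>: "bounded_linear \<Lambda>"
    and L_def: "L = (\<lambda>q. emb q + \<Lambda> q *\<^sub>R ey None)"
    and G_def: "G = (\<lambda>q. emb q + \<Lambda> q *\<^sub>R ey None + (yn p - \<Lambda> (prj p)) *\<^sub>R ey None)"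
  shows "prj (G q) = q" and "yn (G q) = \<Lambda> q + (yn p - \<Lambda> (prj p))" and "G (prj p) = p"
    and "bounded_linear L" and "G q = L q + (yn p - \<Lambda> (prj p)) *\<^sub>R ey None"
    and "L (prj w) = w + (\<Lambda> (prj w) - yn w) *\<^sub>R ey None"
proof -
  show "prj (G q) = q" and "yn (G q) = \<Lambda> q + (yn p - \<Lambda> (prj p))" by (simp_all add: G_def)
  have "G (prj p) = emb (prj p) + yn p *\<^sub>R ey None"
    by (simp add: G_def add.assoc scaleR_add_left[symmetric])
  also have "\<dots> = p" by (rule emb_prj_yn[symmetric])
  finally show "G (prj p) = p" .
  show "bounded_linear L" unfolding L_def
    by (intro bounded_linear_add bounded_linear_emb
        bounded_linear_compose[OF bounded_linear_scaleR_left \<Lambda>])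
  show "G q = L q + (yn p - \<Lambda> (prj p)) *\<^sub>R ey None" by (simp add: G_def L_def)
  have "emb (prj w) = w - yn w *\<^sub>R ey None" using emb_prj_yn[of w] by (simp add: algebra_simps)
  then show "L (prj w) = w + (\<Lambda> (prj w) - yn w) *\<^sub>R ey None"
    by (simp add: L_def algebra_simps scaleR_left_diff_distrib)
qed

text \<open>The affine section of prj along the B-orthogonal complement of e_n, where B is the
  Hessian of f at p and B(e_n,e_n) does not vanish.  The function y_n - f restricted to
  this section is a test function psi on the reduced space; since d f/d y_n = 1 its
  gradient matches that of -f, and completing the square shows that its Levi operator is
  the one of -f plus the rank-one correction (1/B(e_n,e_n)) levi_of (gamma (x) gamma).\<close>
lemma section_test_function:
  fixes f :: "(complex^('m::finite option)) \<times> real \<Rightarrow> real"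
  assumes U: "open U" "p \<in> U" and sm: "smooth_on U f"
    and normal: "dirD f p (ey None) = 1" and ce: "dirD2 f p (ey None) (ey None) \<noteq> 0"
    and \<gamma>_def: "\<gamma> = (\<lambda>w. (dirD2 f p w (ey None) + dirD2 f p (ey None) w) / 2)"
    and \<Lambda>_def: "\<Lambda> = (\<lambda>q. - \<gamma> (emb q) / dirD2 f p (ey None) (ey None))"
    and G_def: "G = (\<lambda>q. emb q + \<Lambda> q *\<^sub>R ey None + (yn p - \<Lambda> (prj p)) *\<^sub>R ey None)"
    and \<psi>_def: "\<psi> = (\<lambda>q. yn (G q) - f (G q))"
  shows "prj (G q) = q" and "G (prj p) = p" and "isCont G q"
    and "open {q. G q \<in> U}" and "smooth_on {q. G q \<in> U} \<psi>"
    and "dt0 \<psi> (prj p) = - dt f p"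
    and "levi0 \<psi> (prj p) = levi_of (\<lambda>w. - dirD f p w) (\<lambda>v w. - dirD2 f p v w)
          + (1 / dirD2 f p (ey None) (ey None)) * levi_of (\<lambda>w. - dirD f p w) (\<lambda>v w. \<gamma> v * \<gamma> w)"
proof -
  let ?e = "ey None :: (complex^('m option)) \<times> real"
  let ?B = "dirD2 f p" and ?c = "dirD2 f p ?e ?e"
  define L where "L = (\<lambda>q. emb q + \<Lambda> q *\<^sub>R ?e)"
  define c where "c = (yn p - \<Lambda> (prj p)) *\<^sub>R ?e"
  have C: "C2_at f p" by (rule smooth_on_imp_C2_at[OF sm U(1,2)])
  have bl_\<gamma>: "bounded_linear \<gamma>"
    unfolding \<gamma>_def by (rule bounded_linear_compose[OF bounded_linear_divide
          bounded_linear_add[OF bounded_linear_dirD2_left[OF C] bounded_linear_dirD2_right[OF C]]])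
  have bl_\<Lambda>: "bounded_linear \<Lambda>"
    unfolding \<Lambda>_def
    by (rule bounded_linear_compose[OF bounded_linear_divide
          bounded_linear_minus[OF bounded_linear_compose[OF bl_\<gamma> bounded_linear_emb]]])
  note G = affine_section_of_prj[OF bl_\<Lambda> L_def G_def, folded c_def]
  note bl_L = G(4) and G_affine = G(5) and G_p = G(3)
  show "prj (G q) = q" by (rule G(1))
  show "G (prj p) = p" by (rule G(3))
  show "isCont G q"
    unfolding G_affine by (intro continuous_add linear_continuous_at[OF bl_L] continuous_const)
  have \<psi>_form: "\<psi> q = (-1) * f (L q + c) + \<Lambda> q + (yn p - \<Lambda> (prj p)) + 0 * (\<Lambda> q + 0)\<^sup>2" for q
    by (simp add: \<psi>_def G(2) G_affine[symmetric])
  show "open {q. G q \<in> U}"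
    using open_affine_preimage[OF U(1) bl_L] by (simp add: G_affine)
  show "smooth_on {q. G q \<in> U} \<psi>"
    using smooth_on_affine_quadratic[OF sm U(1) bl_L bl_\<Lambda> bl_\<Lambda> \<psi>_form] by (simp add: G_affine)
  define q0 where "q0 = prj p"
  have C': "C2_at f (L q0 + c)" using C G_p by (simp add: q0_def G_affine)
  note D\<psi> = C2_at_affine_quadratic[OF C' bl_L bl_\<Lambda> bl_\<Lambda> \<psi>_form]
  have Lq0: "L q0 + c = p" using G_p by (simp add: q0_def G_affine)
  have Df_lin: "dirD f p (x + t *\<^sub>R ?e) = dirD f p x + t" for x t
    using bounded_linear_dirD[OF C] normal
    by (simp add: bounded_linear.linear linear_add linear_scale)
  show "dt0 \<psi> (prj p) = - dt f p"
  proof -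
    have "L (0, 1) = et + \<Lambda> (0, 1) *\<^sub>R ?e" by (simp add: L_def emb_time_direction)
    then show ?thesis by (simp add: dt0_def dt_def D\<psi>(2) Lq0 Df_lin q0_def[symmetric])
  qed
  define a where "a = (\<lambda>w. \<Lambda> (prj w) - yn w)"
  have L_prj: "L (prj w) = w + a w *\<^sub>R ?e" for w unfolding a_def by (rule G(6))
  have a_eq: "a w = - \<gamma> w / ?c" for w
  proof -
    have "\<gamma> (x + t *\<^sub>R y) = \<gamma> x + t * \<gamma> y" for x y t
      using bl_\<gamma> by (simp add: bounded_linear.linear linear_add linear_scale)
    moreover have "\<gamma> ?e = ?c" by (simp add: \<gamma>_def)
    ultimately have "\<gamma> w = \<gamma> (emb (prj w)) + yn w * ?c" using emb_prj_yn[of w] by metis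
    then show ?thesis using ce by (simp add: a_def \<Lambda>_def field_simps)
  qed
  have "(\<lambda>w. dirD \<psi> q0 (prj w) - yn w) = (\<lambda>w. - dirD f p w)"
    by (simp add: fun_eq_iff D\<psi>(2) Lq0 L_prj Df_lin a_def)
  moreover have "dirD2 \<psi> q0 (prj v) (prj w) = - ?B (v + a v *\<^sub>R ?e) (w + a w *\<^sub>R ?e)" for v w
    by (simp add: D\<psi>(3) Lq0 L_prj)
  moreover note levi0_eq_levi_of[OF D\<psi>(1)]
  ultimately show "levi0 \<psi> (prj p) = levi_of (\<lambda>w. - dirD f p w) (\<lambda>v w. - ?B v w)
          + (1 / ?c) * levi_of (\<lambda>w. - dirD f p w) (\<lambda>v w. \<gamma> v * \<gamma> w)"
    unfolding q0_def
    by (simp add: levi_of_complete_square[OF _ dirD2_add_scaleR[OF C] _ ce refl a_eq] \<gamma>_def)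
qed

text \<open>If sigma B(e_n,e_n) > 0 the rank-one correction has the sign of sigma, so sigma times
  the Levi operator of the section test function dominates that of -f.\<close>
lemma section_test_function_levi_bound:
  fixes f :: "(complex^('m::finite option)) \<times> real \<Rightarrow> real"
  assumes U: "open U" "p \<in> U" and sm: "smooth_on U f"
    and normal: "dirD f p (ey None) = 1" and \<sigma>c: "0 < \<sigma> * dirD2 f p (ey None) (ey None)"
    and \<gamma>_def: "\<gamma> = (\<lambda>w. (dirD2 f p w (ey None) + dirD2 f p (ey None) w) / 2)"
    and \<Lambda>_def: "\<Lambda> = (\<lambda>q. - \<gamma> (emb q) / dirD2 f p (ey None) (ey None))"
    and G_def: "G = (\<lambda>q. emb q + \<Lambda> q *\<^sub>R ey None + (yn p - \<Lambda> (prj p)) *\<^sub>R ey None)"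
    and \<psi>_def: "\<psi> = (\<lambda>q. yn (G q) - f (G q))"
  shows "\<sigma> * levi_of (\<lambda>w. - dirD f p w) (\<lambda>v w. - dirD2 f p v w) \<le> \<sigma> * levi0 \<psi> (prj p)"
proof -
  let ?c = "dirD2 f p (ey None) (ey None)"
  have c: "?c \<noteq> 0" using \<sigma>c by auto
  have "0 \<le> \<sigma> / ?c"
    using \<sigma>c by (auto simp: zero_less_mult_iff intro: divide_nonneg_pos divide_nonpos_neg)
  then have "0 \<le> (\<sigma> / ?c) * levi_of (\<lambda>w. - dirD f p w) (\<lambda>v w. \<gamma> v * \<gamma> w)"
    by (rule mult_nonneg_nonneg[OF _ levi_of_rank_one_nonneg])
  then have "0 \<le> \<sigma> * ((1 / ?c) * levi_of (\<lambda>w. - dirD f p w) (\<lambda>v w. \<gamma> v * \<gamma> w))"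
    by simp
  then show ?thesis
    unfolding section_test_function(7)[OF U sm normal c \<gamma>_def \<Lambda>_def G_def \<psi>_def]
    by (simp add: distrib_left)
qed

lemma weak_sol_H0_signed_contact:
  assumes "weak_sol_H0 S u" "q \<in> S" "open V" "q \<in> V" "smooth_on V \<psi>"
    and \<sigma>: "\<sigma> = 1 \<or> \<sigma> = -1" and mn: "loc_min S (\<lambda>r. \<sigma> * (u r - \<psi> r)) q"
  shows "\<sigma> * levi0 \<psi> q \<le> \<sigma> * dt0 \<psi> q"
proof -
  have "(loc_max S (\<lambda>r. u r - \<psi> r) q \<longrightarrow> dt0 \<psi> q \<le> levi0 \<psi> q) \<and>
        (loc_min S (\<lambda>r. u r - \<psi> r) q \<longrightarrow> dt0 \<psi> q \<ge> levi0 \<psi> q)"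
    using assms(1-5) unfolding weak_sol_H0_def by blast
  then show ?thesis using \<sigma> mn unfolding loc_min_signed[OF \<sigma>] by auto
qed

lemma contact_along_section:
  assumes mx: "loc_max (prj -` S) (\<lambda>x. \<sigma> * ((yn x - u (prj x)) - f x)) p"
    and G: "\<And>q. prj (G q) = q" "G (prj p) = p" "\<And>q. isCont G q"
  shows "loc_min S (\<lambda>q. \<sigma> * (u q - (yn (G q) - f (G q)))) (prj p)"
proof -
  have "loc_max S (\<lambda>q. \<sigma> * ((yn (G q) - u (prj (G q))) - f (G q))) (prj p)"
    using mx G(2) by (intro loc_max_compose[where F=G] G(3)) (auto simp: G(1))
  then show ?thesis by (simp add: G(1) loc_max_uminus[symmetric] algebra_simps)
qed

lemma quadratic_perturbation:
  fixes \<phi> :: "(complex^('m::finite option)) \<times> real \<Rightarrow> real"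
  assumes U: "open U" "p \<in> U" and sm: "smooth_on U \<phi>"
    and f_def: "f = (\<lambda>x. \<phi> x + \<kappa> * (yn x - yn p)\<^sup>2)"
  shows "smooth_on U f" and "dirD f p = dirD \<phi> p"
    and "dirD2 f p = (\<lambda>v w. dirD2 \<phi> p v w + 2 * \<kappa> * (yn v * yn w))"
proof -
  have f_form: "f x = 1 * \<phi> ((\<lambda>x. x) x + 0) + (\<lambda>_. 0) x + 0 + \<kappa> * (yn x + - yn p)\<^sup>2" for x
    by (simp add: f_def)
  show "smooth_on U f"
    using smooth_on_affine_quadratic[OF sm U(1) bounded_linear_ident bounded_linear_zero
        bounded_linear_yn f_form] by simp
  have C: "C2_at \<phi> ((\<lambda>x. x) p + 0)" using smooth_on_imp_C2_at[OF sm U] by simp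
  note Df = C2_at_affine_quadratic(2,3)[OF C bounded_linear_ident bounded_linear_zero
      bounded_linear_yn f_form]
  show "dirD f p = dirD \<phi> p" and "dirD2 f p = (\<lambda>v w. dirD2 \<phi> p v w + 2 * \<kappa> * (yn v * yn w))"
    by (simp_all add: fun_eq_iff Df algebra_simps)
qed

text \<open>The test
  function psi for u is built from phi + sigma eps (y_n - y_n(p))^2 by section_test_function;
  the perturbation makes sigma d^2/d y_n^2 strictly positive, so the rank-one correction
  has the right sign.\<close>
lemma contact_inequality:
  fixes \<phi> :: "(complex^('m::finite option)) \<times> real \<Rightarrow> real"
    and u :: "((real^('m option)) \<times> (real^'m)) \<times> real \<Rightarrow> real"
  assumes \<sigma>: "\<sigma> = 1 \<or> \<sigma> = -1" and H0: "weak_sol_H0 S u" and pS: "prj p \<in> S"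
    and U: "open U" "p \<in> U" and sm: "smooth_on U \<phi>"
    and mx: "loc_max (prj -` S) (\<lambda>x. \<sigma> * ((yn x - u (prj x)) - \<phi> x)) p" and \<epsilon>: "\<epsilon> > 0"
  shows "\<sigma> * dt \<phi> p \<le> \<sigma> * levi \<phi> p + \<epsilon> * (2 * levi_of (\<lambda>w. - dirD \<phi> p w) (\<lambda>v w. yn v * yn w))"
proof -
  let ?e = "ey None :: (complex^('m option)) \<times> real"
  let ?v = "\<lambda>x. yn x - u (prj x)"
  have \<sigma>2: "\<sigma> * \<sigma> = 1" using \<sigma> by auto
  have C: "C2_at \<phi> p" by (rule smooth_on_imp_C2_at[OF sm U(1,2)])
  have normal: "dirD \<phi> p ?e = 1" and convex: "0 \<le> \<sigma> * dirD2 \<phi> p ?e ?e"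
    using normal_derivative_at_contact[OF \<sigma> C _ _ mx] pS by simp_all
  define f where "f = (\<lambda>x. \<phi> x + (\<sigma> * \<epsilon>) * (yn x - yn p)\<^sup>2)"
  note pert = quadratic_perturbation[OF U sm f_def]
  have sm_f: "smooth_on U f" and Df_eq: "dirD f p = dirD \<phi> p" by (fact pert(1,2))+
  have D2f: "dirD2 f p = (\<lambda>v w. dirD2 \<phi> p v w + 2 * \<sigma> * \<epsilon> * (yn v * yn w))"
    using pert(3) by (simp add: mult.assoc)
  have f_normal: "dirD f p ?e = 1" using normal by (simp add: Df_eq)
  have "\<sigma> * dirD2 f p ?e ?e = \<sigma> * dirD2 \<phi> p ?e ?e + 2 * (\<sigma> * \<sigma>) * \<epsilon>"
    by (simp add: D2f algebra_simps)
  then have \<sigma>c: "0 < \<sigma> * dirD2 f p ?e ?e" using convex \<sigma>2 \<epsilon> by simp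
  then have c: "dirD2 f p ?e ?e \<noteq> 0" by auto
  define \<gamma> where "\<gamma> = (\<lambda>w. (dirD2 f p w ?e + dirD2 f p ?e w) / 2)"
  define \<Lambda> where "\<Lambda> = (\<lambda>q. - \<gamma> (emb q) / dirD2 f p ?e ?e)"
  define G where "G = (\<lambda>q. emb q + \<Lambda> q *\<^sub>R ?e + (yn p - \<Lambda> (prj p)) *\<^sub>R ?e)"
  define \<psi> where "\<psi> = (\<lambda>q. yn (G q) - f (G q))"
  note sec = section_test_function[OF U sm_f f_normal c \<gamma>_def \<Lambda>_def G_def \<psi>_def]
  define K where "K = levi_of (\<lambda>w. - dirD \<phi> p w) (\<lambda>v w. yn v * yn w)"
  have "(\<lambda>v w. - dirD2 f p v w) = (\<lambda>v w. - dirD2 \<phi> p v w + (- 2 * \<sigma> * \<epsilon>) * (yn v * yn w))"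
    by (simp add: D2f fun_eq_iff)
  then have "levi_of (\<lambda>w. - dirD f p w) (\<lambda>v w. - dirD2 f p v w)
      = - levi_of (dirD \<phi> p) (dirD2 \<phi> p) + (- 2 * \<sigma> * \<epsilon>) * K"
    by (simp only: Df_eq levi_of_add levi_of_uminus levi_of_scale levi_of_uminus_grad K_def)
  then have "\<sigma> * (- levi \<phi> p - 2 * \<sigma> * \<epsilon> * K) \<le> \<sigma> * levi0 \<psi> (prj p)"
    using section_test_function_levi_bound[OF U sm_f f_normal \<sigma>c \<gamma>_def \<Lambda>_def G_def \<psi>_def]
    by (simp add: levi_eq_levi_of)
  moreover have "\<sigma> * (- levi \<phi> p - 2 * \<sigma> * \<epsilon> * K) = - \<sigma> * levi \<phi> p - 2 * (\<sigma> * \<sigma>) * \<epsilon> * K"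
    by (simp add: algebra_simps)
  ultimately have levi_\<psi>: "- \<sigma> * levi \<phi> p - 2 * \<epsilon> * K \<le> \<sigma> * levi0 \<psi> (prj p)"
    using \<sigma>2 by simp
  text \<open>Contact of u with psi: sigma (v - f) <= sigma (v - phi) with equality at p, so
    sigma (v - f) still has a local maximum at p, which is transported along G.\<close>
  moreover have "\<sigma> * levi0 \<psi> (prj p) \<le> \<sigma> * dt0 \<psi> (prj p)"
  proof (rule weak_sol_H0_signed_contact[OF H0 pS sec(4) _ sec(5) \<sigma>])
    show "prj p \<in> {q. G q \<in> U}" using sec(2) U(2) by simp
    have f_below: "\<sigma> * (?v x - f x) \<le> \<sigma> * (?v x - \<phi> x)" for x
    proof -
      have "\<sigma> * (?v x - f x) = \<sigma> * (?v x - \<phi> x) - (\<sigma> * \<sigma>) * \<epsilon> * (yn x - yn p)\<^sup>2"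
        by (simp add: f_def algebra_simps)
      then show ?thesis using \<sigma>2 \<epsilon> by simp
    qed
    have "loc_max (prj -` S) (\<lambda>x. \<sigma> * (?v x - f x)) p"
      using mx order_trans[OF f_below] unfolding loc_max_def by (simp add: f_def) blast
    then show "loc_min S (\<lambda>q. \<sigma> * (u q - \<psi> q)) (prj p)"
      unfolding \<psi>_def by (rule contact_along_section[OF _ sec(1-3)])
  qed
  moreover have "dt f p = dt \<phi> p" by (simp add: dt_def Df_eq)
  ultimately show ?thesis using levi_\<psi> sec(6) unfolding K_def[symmetric] by simp
qed

lemma le_if_le_plus_eps_mult:
  fixes x y K :: real
  assumes "\<And>\<epsilon>. \<epsilon> > 0 \<Longrightarrow> x \<le> y + \<epsilon> * K" shows "x \<le> y"
proof (rule field_le_epsilon)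
  fix e :: real assume e: "0 < e"
  show "x \<le> y + e"
  proof (cases "K > 0")
    case True
    then show ?thesis using assms[of "e / K"] e by simp
  next
    case False
    then show ?thesis using assms[of 1] e by simp
  qed
qed

lemma weak_sol_H_if_weak_sol_H0:
  fixes D :: "((real^('m::finite option)) \<times> (real^'m)) set"
    and u :: "((real^('m option)) \<times> (real^'m)) \<times> real \<Rightarrow> real"
  assumes H0: "weak_sol_H0 (D \<times> {0<..}) u"
    and cu: "continuous_on (D \<times> {0<..}) u"
  shows "weak_sol_H {p. proj (fst p) \<in> D \<and> snd p > 0}
           (\<lambda>p. Im (fst p $ None) - u (proj (fst p), snd p))"
proof -
  let ?\<Omega> = "{p. proj (fst p) \<in> D \<and> snd p > 0} :: ((complex^('m option)) \<times> real) set"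
  let ?v = "\<lambda>p::(complex^('m option)) \<times> real. Im (fst p $ None) - u (proj (fst p), snd p)"
  let ?Dt = "D \<times> {0<..}"
  have \<Omega>_eq: "?\<Omega> = prj -` ?Dt" by (auto simp: prj_def)
  have v_eq: "?v x = yn x - u (prj x)" for x by (simp add: yn_def prj_def)
  have "continuous_on ?\<Omega> (\<lambda>x. yn x - u (prj x))"
  proof (intro continuous_on_diff continuous_on_compose2[OF cu])
    show "continuous_on ?\<Omega> prj" and "continuous_on ?\<Omega> yn"
      by (rule linear_continuous_on[OF bounded_linear_prj] linear_continuous_on[OF bounded_linear_yn])+
  qed (auto simp: \<Omega>_eq)
  then have cont: "continuous_on ?\<Omega> ?v" unfolding v_eq .
  have contact: "\<not> (\<forall>a. dz \<phi> p a = 0) \<and> \<sigma> * dt \<phi> p \<le> \<sigma> * levi \<phi> p"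
    if \<sigma>: "\<sigma> = 1 \<or> \<sigma> = -1" and p: "p \<in> ?\<Omega>" and U: "open U" "p \<in> U" and sm: "smooth_on U \<phi>"
      and mx: "loc_max ?\<Omega> (\<lambda>x. \<sigma> * (?v x - \<phi> x)) p" for \<sigma> p \<phi> U
  proof
    have mx': "loc_max (prj -` ?Dt) (\<lambda>x. \<sigma> * ((yn x - u (prj x)) - \<phi> x)) p"
      using mx unfolding \<Omega>_eq v_eq .
    have pDt: "prj p \<in> ?Dt" using p by (simp add: \<Omega>_eq)
    have "dirD \<phi> p (ey None) = 1"
      using normal_derivative_at_contact(1)[OF \<sigma> smooth_on_imp_C2_at[OF sm U(1,2)] _ _ mx'] pDt
      by simp
    then show "\<not> (\<forall>a. dz \<phi> p a = 0)" by (simp add: dz_nonzero_if_normal_derivative)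
    show "\<sigma> * dt \<phi> p \<le> \<sigma> * levi \<phi> p"
      by (rule le_if_le_plus_eps_mult, rule contact_inequality[OF \<sigma> H0 pDt U sm mx'])
  qed
  show ?thesis
  proof (rule weak_sol_H_if_nondegenerate_contacts[OF cont])
    fix p \<phi> U assume "p \<in> ?\<Omega>" "open U" "p \<in> U" "smooth_on U \<phi>"
    then show "loc_max ?\<Omega> (\<lambda>x. ?v x - \<phi> x) p \<Longrightarrow> \<not> (\<forall>a. dz \<phi> p a = 0) \<and> dt \<phi> p \<le> levi \<phi> p"
      and "loc_min ?\<Omega> (\<lambda>x. ?v x - \<phi> x) p \<Longrightarrow> \<not> (\<forall>a. dz \<phi> p a = 0) \<and> levi \<phi> p \<le> dt \<phi> p"
      using contact[of 1 p U \<phi>] contact[of "-1" p U \<phi>]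
      unfolding mult_1 mult_minus1 loc_max_uminus by auto
  qed
qed

theorem lemma3p2:
  fixes D :: "((real^('m::finite option)) \<times> (real^'m)) set"
    and u :: "((real^('m option)) \<times> (real^'m)) \<times> real \<Rightarrow> real"
  assumes "open D" and "connected D" and "D \<noteq> {}"
    and "continuous_on (D \<times> {0<..}) u"
  shows "weak_sol_H {p. proj (fst p) \<in> D \<and> snd p > 0}
           (\<lambda>p. Im (fst p $ None) - u (proj (fst p), snd p))
         \<longleftrightarrow> weak_sol_H0 (D \<times> {0<..}) u"
  using weak_sol_H0_if_weak_sol_H[OF _ assms(4)] weak_sol_H_if_weak_sol_H0[OF _ assms(4)] by blast

end
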